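(* Let $a^*\in A$ be a pure strategy profile of $G$. If for every $\bar p\in(0,1)$ there exists $p\in(\bar p,1)$ such that $a^*$ is stable for the degree of observability $p$, then $a^*$ is weakly Pareto efficient with respect to $\pi$.
   Context: Objective game: $G=(N,A,\pi)$ is a finite $n$-player normal-form game, $N=\{1,\dots,n\}$, finite action sets $A_i$, $A=\prod_iA_i$, fitness functions $\pi_i:A\to\mathbb{R}$ extended multilinearly to $\prod_i\Delta(A_i)$. $\sigma$ strongly Pareto dominates $\sigma'$ if $\pi_i(\sigma)>\pi_i(\sigma')$ for all $i$; $\sigma$ is weakly Pareto efficient if no profile in $\prod_i\Delta(A_i)$ strongly Pareto dominates it. Preference types: $\Theta=\mathbb{R}^A$ (extended multilinearly). $\mathcal{M}(\Theta^n)$: product distributions $\mu=\mu_1\times\dots\times\mu_n$ with finitely supported marginals; $\operatorname{supp}\mu=\prod_i\operatorname{supp}\mu_i$, $\mu(\theta)=\prod_i\mu_i(\theta_i)$, $\mu_{-i}(\theta_{-i})=\prod_{j\ne i}\mu_j(\theta_j)$. Mutants: for nonempty $J\subseteq N$, $\tilde\theta_J\in\prod_{j\in J}(\Theta\setminus\operatorname{supp}\mu_j)$ with shares $\varepsilon\in(0,1)^{|J|}$, $\|\varepsilon\|=\max_j\varepsilon_j$; post-entry $\tilde\mu^\varepsilon_i=(1-\varepsilon_i)\mu_i+\varepsilon_i\delta_{\tilde\theta_i}$ for $i\in J$, $\mu_i$ otherwise. Partial observability with degree $p\in(0,1)$: each player independently observes opponents' types with probability $p$ and otherwise knows only $\mu_{-i}$.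 Strategies: $b:\operatorname{supp}\mu\to\prod_i\Delta(A_i)$ (play when observing) and $s_i:\operatorname{supp}\mu_i\to\Delta(A_i)$ (play when not observing), $s(\theta)=(s_i(\theta_i))_i$. For a matched profile $\theta$ and the set $T\subseteq N$ of non-observing players, the profile played is $(s(\theta)_T,b(\theta)_{-T})$. $(b,s)$ is an equilibrium if for all $\theta\in\operatorname{supp}\mu$ and $i$: $b_i(\theta)\in\arg\max_{\sigma_i}\sum_{T\subseteq N\setminus\{i\}}p^{n-1-|T|}(1-p)^{|T|}\theta_i(\sigma_i,(s_{-i}(\theta_{-i})_T,b_{-i}(\theta)_{-T}))$ and $s_i(\theta_i)\in\arg\max_{\sigma_i}\sum_{\theta'_{-i}}\mu_{-i}(\theta'_{-i})\sum_{T\subseteq N\setminus\{i\}}p^{n-1-|T|}(1-p)^{|T|}\theta_i(\sigma_i,(s_{-i}(\theta'_{-i})_T,b_{-i}(\theta_i,\theta'_{-i})_{-T}))$; $B_p(\mu)$ is the set of these; $(\mu,b,s)$ is a configuration. Aggregate outcome: $\varphi_{\mu,b,s}(a)=\sum_{\theta}\mu(\theta)\sum_{T\subseteq N}p^{n-|T|}(1-p)^{|T|}\prod_i(s(\theta)_T,b(\theta)_{-T})_i(a_i)$. Average fitness: $\Pi_{\theta_i}(\mu;b,s)=\sum_{\theta'_{-i}}\mu_{-i}(\theta'_{-i})\sum_{T\subseteq N}p^{n-|T|}(1-p)^{|T|}\pi_i(s(\theta_i,\theta'_{-i})_T,b(\theta_i,\theta'_{-i})_{-T})$. Balanced: equal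 average fitness of all types within each population. Nearby set: $B_p^\eta(\tilde\mu^\varepsilon;b,s)=\{(\tilde b,\tilde s)\in B_p(\tilde\mu^\varepsilon):\max_i\|\tilde b_i(\theta)-b_i(\theta)\|\le\eta,\ \max_i\|\tilde s_i(\theta_i)-s_i(\theta_i)\|\le\eta\ \forall\theta\in\operatorname{supp}\mu\}$. $(\mu,b,s)$ is stable (for degree $p$) if balanced and for every nonempty $J$, every $\tilde\theta_J$, every $\eta>0$, there are $\bar\eta\in[0,\eta)$, $\bar\epsilon\in(0,1)$ such that for all $\varepsilon$ with $\|\varepsilon\|\in(0,\bar\epsilon)$, $B_p^{\bar\eta}(\tilde\mu^\varepsilon;b,s)\ne\emptyset$ and each of its elements satisfies (i) some $j\in J$ has $\Pi_{\theta_j}>\Pi_{\tilde\theta_j}$ (post-entry) for all $\theta_j\in\operatorname{supp}\mu_j$, or (ii) for every $i$ all types in $\operatorname{supp}\tilde\mu^\varepsilon_i$ have equal post-entry average fitness. A pure profile $a^*$ is stable for degree $p$ if the point mass at $a^*$ is the aggregate outcome of a stable configuration for $p$. *)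

theory Defs
  imports Complex_Main "HOL-Library.FuncSet"
begin

text \<open>Players are 0,...,n-1 (the paper's 1,...,n).\<close>

type_synonym 'a prof = "nat \<Rightarrow> 'a"
type_synonym 'a ptype = "'a prof \<Rightarrow> real"
type_synonym 'a mixed = "'a \<Rightarrow> real"
type_synonym 'a mprof = "nat \<Rightarrow> 'a mixed"
type_synonym 'a tprof = "nat \<Rightarrow> 'a ptype"
type_synonym 'a dist = "'a ptype \<Rightarrow> real"

definition PureProfs :: "nat \<Rightarrow> (nat \<Rightarrow> 'a set) \<Rightarrow> 'a prof set" where
  "PureProfs n A = PiE {..<n} A"

definition Delta :: "'a set \<Rightarrow> 'a mixed set" where
  "Delta S = {\<sigma>. (\<forall>x. 0 \<le> \<sigma> x) \<and> (\<forall>x. x \<notin> S \<longrightarrow> \<sigma> x = 0) \<and> sum \<sigma> S = 1}"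

definition MixedProfs :: "nat \<Rightarrow> (nat \<Rightarrow> 'a set) \<Rightarrow> 'a mprof set" where
  "MixedProfs n A = {\<sigma>. \<forall>i<n. \<sigma> i \<in> Delta (A i)}"

definition mlext :: "nat \<Rightarrow> (nat \<Rightarrow> 'a set) \<Rightarrow> ('a prof \<Rightarrow> real) \<Rightarrow> 'a mprof \<Rightarrow> real" where
  "mlext n A u \<sigma> = (\<Sum>a\<in>PureProfs n A. (\<Prod>i<n. \<sigma> i (a i)) * u a)"

definition pure_mixed :: "'a prof \<Rightarrow> 'a mprof" where
  "pure_mixed a = (\<lambda>i x. if x = a i then 1 else 0)"

definition strongly_pareto_dominates ::
  "nat \<Rightarrow> (nat \<Rightarrow> 'a set) \<Rightarrow> (nat \<Rightarrow> 'a prof \<Rightarrow> real) \<Rightarrow> 'a mprof \<Rightarrow> 'a mprof \<Rightarrow> bool" where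
  "strongly_pareto_dominates n A \<pi> \<sigma> \<sigma>' = (\<forall>i<n. mlext n A (\<pi> i) \<sigma> > mlext n A (\<pi> i) \<sigma>')"

definition weakly_pareto_efficient ::
  "nat \<Rightarrow> (nat \<Rightarrow> 'a set) \<Rightarrow> (nat \<Rightarrow> 'a prof \<Rightarrow> real) \<Rightarrow> 'a mprof \<Rightarrow> bool" where
  "weakly_pareto_efficient n A \<pi> \<sigma> =
     (\<not> (\<exists>\<sigma>'\<in>MixedProfs n A. strongly_pareto_dominates n A \<pi> \<sigma>' \<sigma>))"

text \<open>Preference types: real functions on the pure profiles A (represented as
functions vanishing outside A, so that Theta corresponds exactly to R^A).\<close>
definition Theta :: "nat \<Rightarrow> (nat \<Rightarrow> 'a set) \<Rightarrow> 'a ptype set" where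
  "Theta n A = {\<theta>. \<forall>a. a \<notin> PureProfs n A \<longrightarrow> \<theta> a = 0}"

definition dsupp :: "('b \<Rightarrow> real) \<Rightarrow> 'b set" where
  "dsupp m = {x. m x \<noteq> 0}"

definition fsdist :: "('b \<Rightarrow> real) \<Rightarrow> 'b set \<Rightarrow> bool" where
  "fsdist m S = ((\<forall>x. 0 \<le> m x) \<and> finite (dsupp m) \<and> dsupp m \<subseteq> S \<and> sum m (dsupp m) = 1)"

text \<open>A product distribution is given by its marginals mu i.\<close>
definition ProdDist :: "nat \<Rightarrow> (nat \<Rightarrow> 'a set) \<Rightarrow> (nat \<Rightarrow> 'a dist) \<Rightarrow> bool" where
  "ProdDist n A \<mu> = (\<forall>i<n. fsdist (\<mu> i) (Theta n A))"

definition TP :: "nat \<Rightarrow> (nat \<Rightarrow> 'a dist) \<Rightarrow> 'a tprof set" where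
  "TP n \<mu> = PiE {..<n} (\<lambda>i. dsupp (\<mu> i))"

definition TPi :: "nat \<Rightarrow> (nat \<Rightarrow> 'a dist) \<Rightarrow> nat \<Rightarrow> 'a ptype \<Rightarrow> 'a tprof set" where
  "TPi n \<mu> i t = PiE {..<n} (\<lambda>j. if j = i then {t} else dsupp (\<mu> j))"

definition muminus :: "nat \<Rightarrow> (nat \<Rightarrow> 'a dist) \<Rightarrow> nat \<Rightarrow> 'a tprof \<Rightarrow> real" where
  "muminus n \<mu> i \<theta> = (\<Prod>j\<in>{..<n} - {i}. \<mu> j (\<theta> j))"

definition mix :: "nat set \<Rightarrow> 'a mprof \<Rightarrow> 'a mprof \<Rightarrow> 'a mprof" where
  "mix T \<sigma> \<tau> = (\<lambda>i. if i \<in> T then \<sigma> i else \<tau> i)"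

definition sprof :: "(nat \<Rightarrow> 'a ptype \<Rightarrow> 'a mixed) \<Rightarrow> 'a tprof \<Rightarrow> 'a mprof" where
  "sprof s \<theta> = (\<lambda>i. s i (\<theta> i))"

definition pay_obs ::
  "nat \<Rightarrow> (nat \<Rightarrow> 'a set) \<Rightarrow> real \<Rightarrow> ('a tprof \<Rightarrow> 'a mprof) \<Rightarrow> (nat \<Rightarrow> 'a ptype \<Rightarrow> 'a mixed)
   \<Rightarrow> 'a tprof \<Rightarrow> nat \<Rightarrow> ('a prof \<Rightarrow> real) \<Rightarrow> 'a mixed \<Rightarrow> real" where
  "pay_obs n A p b s \<theta> i u \<sigma>i =
     (\<Sum>T\<in>Pow ({..<n} - {i}). p ^ (n - 1 - card T) * (1 - p) ^ card T *
        mlext n A u ((mix T (sprof s \<theta>) (b \<theta>))(i := \<sigma>i)))"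

definition pay_nobs ::
  "nat \<Rightarrow> (nat \<Rightarrow> 'a set) \<Rightarrow> real \<Rightarrow> (nat \<Rightarrow> 'a dist) \<Rightarrow> ('a tprof \<Rightarrow> 'a mprof)
   \<Rightarrow> (nat \<Rightarrow> 'a ptype \<Rightarrow> 'a mixed) \<Rightarrow> nat \<Rightarrow> 'a ptype \<Rightarrow> 'a mixed \<Rightarrow> real" where
  "pay_nobs n A p \<mu> b s i t \<sigma>i =
     (\<Sum>\<theta>\<in>TPi n \<mu> i t. muminus n \<mu> i \<theta> * pay_obs n A p b s \<theta> i t \<sigma>i)"

definition is_equilibrium ::
  "nat \<Rightarrow> (nat \<Rightarrow> 'a set) \<Rightarrow> real \<Rightarrow> (nat \<Rightarrow> 'a dist) \<Rightarrow> ('a tprof \<Rightarrow> 'a mprof)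
   \<Rightarrow> (nat \<Rightarrow> 'a ptype \<Rightarrow> 'a mixed) \<Rightarrow> bool" where
  "is_equilibrium n A p \<mu> b s =
     ((\<forall>\<theta>\<in>TP n \<mu>. \<forall>i<n. b \<theta> i \<in> Delta (A i) \<and>
         (\<forall>\<sigma>\<in>Delta (A i). pay_obs n A p b s \<theta> i (\<theta> i) \<sigma> \<le> pay_obs n A p b s \<theta> i (\<theta> i) (b \<theta> i))) \<and>
      (\<forall>i<n. \<forall>t\<in>dsupp (\<mu> i). s i t \<in> Delta (A i) \<and>
         (\<forall>\<sigma>\<in>Delta (A i). pay_nobs n A p \<mu> b s i t \<sigma> \<le> pay_nobs n A p \<mu> b s i t (s i t))))"

definition Bp ::
  "nat \<Rightarrow> (nat \<Rightarrow> 'a set) \<Rightarrow> real \<Rightarrow> (nat \<Rightarrow> 'a dist)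
   \<Rightarrow> (('a tprof \<Rightarrow> 'a mprof) \<times> (nat \<Rightarrow> 'a ptype \<Rightarrow> 'a mixed)) set" where
  "Bp n A p \<mu> = {(b, s). is_equilibrium n A p \<mu> b s}"

definition outcome ::
  "nat \<Rightarrow> real \<Rightarrow> (nat \<Rightarrow> 'a dist) \<Rightarrow> ('a tprof \<Rightarrow> 'a mprof)
   \<Rightarrow> (nat \<Rightarrow> 'a ptype \<Rightarrow> 'a mixed) \<Rightarrow> 'a prof \<Rightarrow> real" where
  "outcome n p \<mu> b s a =
     (\<Sum>\<theta>\<in>TP n \<mu>. (\<Prod>i<n. \<mu> i (\<theta> i)) *
        (\<Sum>T\<in>Pow {..<n}. p ^ (n - card T) * (1 - p) ^ card T *
           (\<Prod>i<n. mix T (sprof s \<theta>) (b \<theta>) i (a i))))"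

definition avgfit ::
  "nat \<Rightarrow> (nat \<Rightarrow> 'a set) \<Rightarrow> (nat \<Rightarrow> 'a prof \<Rightarrow> real) \<Rightarrow> real \<Rightarrow> (nat \<Rightarrow> 'a dist)
   \<Rightarrow> ('a tprof \<Rightarrow> 'a mprof) \<Rightarrow> (nat \<Rightarrow> 'a ptype \<Rightarrow> 'a mixed) \<Rightarrow> nat \<Rightarrow> 'a ptype \<Rightarrow> real" where
  "avgfit n A \<pi> p \<mu> b s i t =
     (\<Sum>\<theta>\<in>TPi n \<mu> i t. muminus n \<mu> i \<theta> *
        (\<Sum>T\<in>Pow {..<n}. p ^ (n - card T) * (1 - p) ^ card T *
           mlext n A (\<pi> i) (mix T (sprof s \<theta>) (b \<theta>))))"

definition balanced ::
  "nat \<Rightarrow> (nat \<Rightarrow> 'a set) \<Rightarrow> (nat \<Rightarrow> 'a prof \<Rightarrow> real) \<Rightarrow> real \<Rightarrow> (nat \<Rightarrow> 'a dist)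
   \<Rightarrow> ('a tprof \<Rightarrow> 'a mprof) \<Rightarrow> (nat \<Rightarrow> 'a ptype \<Rightarrow> 'a mixed) \<Rightarrow> bool" where
  "balanced n A \<pi> p \<mu> b s =
     (\<forall>i<n. \<forall>t\<in>dsupp (\<mu> i). \<forall>t'\<in>dsupp (\<mu> i).
        avgfit n A \<pi> p \<mu> b s i t = avgfit n A \<pi> p \<mu> b s i t')"

definition postentry ::
  "(nat \<Rightarrow> 'a dist) \<Rightarrow> nat set \<Rightarrow> 'a tprof \<Rightarrow> (nat \<Rightarrow> real) \<Rightarrow> nat \<Rightarrow> 'a dist" where
  "postentry \<mu> J mt \<epsilon> =
     (\<lambda>i. if i \<in> J then (\<lambda>t. (1 - \<epsilon> i) * \<mu> i t + \<epsilon> i * (if t = mt i then 1 else 0)) else \<mu> i)"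

definition mdist :: "'a set \<Rightarrow> 'a mixed \<Rightarrow> 'a mixed \<Rightarrow> real" where
  "mdist S \<sigma> \<tau> = Max ((\<lambda>x. \<bar>\<sigma> x - \<tau> x\<bar>) ` S)"

definition Nearby ::
  "nat \<Rightarrow> (nat \<Rightarrow> 'a set) \<Rightarrow> real \<Rightarrow> (nat \<Rightarrow> 'a dist) \<Rightarrow> ('a tprof \<Rightarrow> 'a mprof)
   \<Rightarrow> (nat \<Rightarrow> 'a ptype \<Rightarrow> 'a mixed) \<Rightarrow> (nat \<Rightarrow> 'a dist) \<Rightarrow> real
   \<Rightarrow> (('a tprof \<Rightarrow> 'a mprof) \<times> (nat \<Rightarrow> 'a ptype \<Rightarrow> 'a mixed)) set" where
  "Nearby n A p \<mu> b s \<mu>' \<eta> =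
     {(b', s') \<in> Bp n A p \<mu>'.
        \<forall>\<theta>\<in>TP n \<mu>. \<forall>i<n. mdist (A i) (b' \<theta> i) (b \<theta> i) \<le> \<eta> \<and>
                          mdist (A i) (s' i (\<theta> i)) (s i (\<theta> i)) \<le> \<eta>}"

definition stable ::
  "nat \<Rightarrow> (nat \<Rightarrow> 'a set) \<Rightarrow> (nat \<Rightarrow> 'a prof \<Rightarrow> real) \<Rightarrow> real \<Rightarrow> (nat \<Rightarrow> 'a dist)
   \<Rightarrow> ('a tprof \<Rightarrow> 'a mprof) \<Rightarrow> (nat \<Rightarrow> 'a ptype \<Rightarrow> 'a mixed) \<Rightarrow> bool" where
  "stable n A \<pi> p \<mu> b s =
     (balanced n A \<pi> p \<mu> b s \<and>
      (\<forall>J mt. J \<noteq> {} \<and> J \<subseteq> {..<n} \<and> (\<forall>j\<in>J. mt j \<in> Theta n A - dsupp (\<mu> j)) \<longrightarrow>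
        (\<forall>\<eta>>0. \<exists>\<eta>b. 0 \<le> \<eta>b \<and> \<eta>b < \<eta> \<and> (\<exists>eb. 0 < eb \<and> eb < 1 \<and>
          (\<forall>\<epsilon>. (\<forall>j\<in>J. 0 < \<epsilon> j \<and> \<epsilon> j < 1) \<and> Max (\<epsilon> ` J) < eb \<longrightarrow>
             (let \<mu>' = postentry \<mu> J mt \<epsilon> in
               Nearby n A p \<mu> b s \<mu>' \<eta>b \<noteq> {} \<and>
               (\<forall>(b', s')\<in>Nearby n A p \<mu> b s \<mu>' \<eta>b.
                  (\<exists>j\<in>J. \<forall>t\<in>dsupp (\<mu> j).
                      avgfit n A \<pi> p \<mu>' b' s' j t > avgfit n A \<pi> p \<mu>' b' s' j (mt j)) \<or>
                  (\<forall>i<n. \<forall>t\<in>dsupp (\<mu>' i). \<forall>t'\<in>dsupp (\<mu>' i).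
                      avgfit n A \<pi> p \<mu>' b' s' i t = avgfit n A \<pi> p \<mu>' b' s' i t'))))))))"

definition stable_pure ::
  "nat \<Rightarrow> (nat \<Rightarrow> 'a set) \<Rightarrow> (nat \<Rightarrow> 'a prof \<Rightarrow> real) \<Rightarrow> real \<Rightarrow> 'a prof \<Rightarrow> bool" where
  "stable_pure n A \<pi> p a0 =
     (\<exists>\<mu> b s. ProdDist n A \<mu> \<and> (b, s) \<in> Bp n A p \<mu> \<and> stable n A \<pi> p \<mu> b s \<and>
        (\<forall>a\<in>PureProfs n A. outcome n p \<mu> b s a = (if a = a0 then 1 else 0)))"

end

theory Submission
  imports Defs
begin

text \<open>Suppose tau strongly Pareto dominates the pure profile a*, and consider a stable
  configuration whose aggregate outcome is a*. All weights of the outcome are positive, so every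
  incumbent type plays a* whether it observes or not; hence a* is a Nash equilibrium of the game
  with payoffs theta for every incumbent type theta. Now let one indifferent type (a constant
  utility) enter every population and let observing players switch to tau exactly in matches
  consisting of mutants only. This is again an equilibrium, at distance 0 from the old one, and
  in every population a mutant outperforms the incumbents by a positive multiple of the
  observed gain sum_T p^(n-|T|) (1-p)^|T| (pi_i(mix T a* tau) - pi_i(a*)). As p tends to 1 the
  observed gain tends to pi_i(tau) - pi_i(a*) > 0, so for p close to 1 neither alternative
  required by stability can hold.\<close>

lemma Delta_nonneg: "\<sigma> \<in> Delta S \<Longrightarrow> 0 \<le> \<sigma> x"
  by (simp add: Delta_def)

lemma Delta_le_one:
  assumes "finite S" "\<sigma> \<in> Delta S"
  shows "\<sigma> x \<le> 1"
proof (cases "x \<in> S")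
  case True
  then have "\<sigma> x \<le> sum \<sigma> S"
    using assms by (intro member_le_sum) (auto simp: Delta_def)
  then show ?thesis using assms by (simp add: Delta_def)
qed (use assms in \<open>simp add: Delta_def\<close>)

lemma mix_same [simp]: "mix T \<sigma> \<sigma> = \<sigma>"
  by (simp add: mix_def)

lemma mix_empty [simp]: "mix {} \<sigma> \<tau> = \<tau>"
  by (simp add: mix_def)

lemma pure_mixed_MixedProfs:
  assumes "\<And>j. j < n \<Longrightarrow> finite (A j)" "a \<in> PureProfs n A"
  shows "pure_mixed a \<in> MixedProfs n A"
  using assms by (auto simp: MixedProfs_def Delta_def pure_mixed_def PureProfs_def PiE_iff)

lemma mlext_cong:
  "(\<And>j. j < n \<Longrightarrow> \<sigma> j = \<tau> j) \<Longrightarrow> mlext n A u \<sigma> = mlext n A u \<tau>"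
  unfolding mlext_def by (intro sum.cong prod.cong) auto

lemma sum_prod_MixedProfs:
  assumes "\<And>j. j < n \<Longrightarrow> finite (A j)" "\<sigma> \<in> MixedProfs n A"
  shows "(\<Sum>a\<in>PureProfs n A. \<Prod>i<n. \<sigma> i (a i)) = 1"
proof -
  have "(\<Sum>a\<in>PureProfs n A. \<Prod>i<n. \<sigma> i (a i)) = (\<Prod>i<n. sum (\<sigma> i) (A i))"
    unfolding PureProfs_def using assms(1) by (subst prod_sum_PiE) auto
  also have "\<dots> = 1"
    using assms(2) by (intro prod.neutral) (simp add: MixedProfs_def Delta_def)
  finally show ?thesis .
qed

lemma MixedProfs_concentrated_eq_pure_mixed:
  assumes finA: "\<And>j. j < n \<Longrightarrow> finite (A j)" and \<sigma>: "\<sigma> \<in> MixedProfs n A"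
    and a: "a \<in> PureProfs n A"
    and zero: "\<And>a'. a' \<in> PureProfs n A \<Longrightarrow> a' \<noteq> a \<Longrightarrow> (\<Prod>j<n. \<sigma> j (a' j)) = 0"
    and i: "i < n"
  shows "\<sigma> i = pure_mixed a i"
proof -
  have \<Delta>: "\<And>j. j < n \<Longrightarrow> \<sigma> j \<in> Delta (A j)" using \<sigma> by (simp add: MixedProfs_def)
  have fin: "finite (PureProfs n A)"
    unfolding PureProfs_def using finA by (intro finite_PiE) auto
  have "1 = (\<Sum>a'\<in>PureProfs n A. \<Prod>j<n. \<sigma> j (a' j))"
    using sum_prod_MixedProfs[OF finA \<sigma>] by simp
  also have "\<dots> = (\<Prod>j<n. \<sigma> j (a j)) + (\<Sum>a'\<in>PureProfs n A - {a}. \<Prod>j<n. \<sigma> j (a' j))"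
    using fin a by (rule sum.remove)
  also have "(\<Sum>a'\<in>PureProfs n A - {a}. \<Prod>j<n. \<sigma> j (a' j)) = 0"
    using zero by (intro sum.neutral) auto
  finally have prod_one: "(\<Prod>j<n. \<sigma> j (a j)) = 1" by simp
  have "(\<Prod>j<n. \<sigma> j (a j)) = \<sigma> i (a i) * (\<Prod>j\<in>{..<n} - {i}. \<sigma> j (a j))"
    using i by (simp add: prod.remove)
  also have "\<dots> \<le> \<sigma> i (a i)"
    using \<Delta> i finA by (intro mult_left_le prod_le_1 prod_nonneg) (auto intro: Delta_nonneg Delta_le_one)
  finally have ai: "\<sigma> i (a i) = 1"
    using prod_one Delta_le_one[OF finA[OF i] \<Delta>[OF i]] by (simp add: antisym)
  have a_in: "a i \<in> A i" using a i by (auto simp: PureProfs_def)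
  have "sum (\<sigma> i) (A i) = \<sigma> i (a i) + sum (\<sigma> i) (A i - {a i})"
    using finA[OF i] a_in by (simp add: sum.remove)
  then have "sum (\<sigma> i) (A i - {a i}) = 0" using ai \<Delta>[OF i] by (simp add: Delta_def)
  then have "\<sigma> i x = 0" if "x \<in> A i" "x \<noteq> a i" for x
    using that finA[OF i] \<Delta>[OF i] by (simp add: sum_nonneg_eq_0_iff Delta_nonneg)
  moreover have "\<sigma> i x = 0" if "x \<notin> A i" for x using that \<Delta>[OF i] by (simp add: Delta_def)
  ultimately show ?thesis using ai by (auto simp: pure_mixed_def fun_eq_iff)
qed

definition const_type :: "nat \<Rightarrow> (nat \<Rightarrow> 'a set) \<Rightarrow> real \<Rightarrow> 'a ptype" where
  "const_type n A c = (\<lambda>a. if a \<in> PureProfs n A then c else 0)"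

lemma const_type_Theta: "const_type n A c \<in> Theta n A"
  by (simp add: const_type_def Theta_def)

lemma mlext_const_type:
  assumes "\<And>j. j < n \<Longrightarrow> finite (A j)" "\<sigma> \<in> MixedProfs n A"
  shows "mlext n A (const_type n A c) \<sigma> = c"
proof -
  have "mlext n A (const_type n A c) \<sigma> = (\<Sum>a\<in>PureProfs n A. (\<Prod>i<n. \<sigma> i (a i)) * c)"
    unfolding mlext_def const_type_def by (intro sum.cong) auto
  also have "\<dots> = c"
    by (simp add: sum_prod_MixedProfs[OF assms] flip: sum_distrib_right)
  finally show ?thesis .
qed

lemma exists_const_type_notin:
  assumes "finite S" "PureProfs n A \<noteq> {}"
  shows "\<exists>c. const_type n A c \<notin> S"
proof -
  obtain a where a: "a \<in> PureProfs n A" using assms(2) by blast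
  have "inj (const_type n A)"
  proof (rule injI)
    fix c d assume "const_type n A c = const_type n A d"
    then have "const_type n A c a = const_type n A d a" by simp
    then show "c = d" using a by (simp add: const_type_def)
  qed
  then have "infinite (range (const_type n A))"
    by (simp add: finite_image_iff infinite_UNIV_char_0)
  then show ?thesis
    using assms(1) finite_subset[of "range (const_type n A)" S] by auto
qed

text \<open>The players in T do not observe and keep sigma; the observers switch to tau.\<close>
definition observed_gain ::
  "nat \<Rightarrow> (nat \<Rightarrow> 'a set) \<Rightarrow> real \<Rightarrow> ('a prof \<Rightarrow> real) \<Rightarrow> 'a mprof \<Rightarrow> 'a mprof \<Rightarrow> real" where
  "observed_gain n A p u \<sigma> \<tau> =
     (\<Sum>T\<in>Pow {..<n}. p ^ (n - card T) * (1 - p) ^ card T * (mlext n A u (mix T \<sigma> \<tau>) - mlext n A u \<sigma>))"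

lemma observed_gain_at_1: "observed_gain n A 1 u \<sigma> \<tau> = mlext n A u \<tau> - mlext n A u \<sigma>"
proof -
  have "(\<Sum>T\<in>Pow {..<n} - {{}}. (1::real) ^ (n - card T) * (1 - 1) ^ card T * g T) = 0" for g
    by (rule sum.neutral) (auto simp: card_eq_0_iff dest: finite_subset[OF _ finite_lessThan])
  then show ?thesis
    unfolding observed_gain_def by (subst sum.remove[of _ "{}"]) auto
qed

lemma eventually_observed_gain_pos:
  assumes "mlext n A u \<sigma> < mlext n A u \<tau>"
  shows "eventually (\<lambda>p. 0 < observed_gain n A p u \<sigma> \<tau>) (at_left 1)"
proof (rule order_tendstoD(1))
  have "isCont (\<lambda>p. observed_gain n A p u \<sigma> \<tau>) 1"
    unfolding observed_gain_def by (intro continuous_intros)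
  then show "((\<lambda>p. observed_gain n A p u \<sigma> \<tau>) \<longlongrightarrow> observed_gain n A 1 u \<sigma> \<tau>) (at_left 1)"
    by (simp add: isCont_def filterlim_at_split)
  show "0 < observed_gain n A 1 u \<sigma> \<tau>"
    using assms by (simp add: observed_gain_at_1)
qed

lemma TP_component: "\<theta> \<in> TP n \<mu> \<Longrightarrow> i < n \<Longrightarrow> \<theta> i \<in> dsupp (\<mu> i)"
  by (auto simp: TP_def)

lemma TPi_component: "\<theta> \<in> TPi n \<mu> i t \<Longrightarrow> i < n \<Longrightarrow> \<theta> i = t"
  by (auto simp: TPi_def PiE_iff dest!: bspec[of _ _ i])

lemma dsupp_nonempty: "fsdist m S \<Longrightarrow> dsupp m \<noteq> {}"
  by (auto simp: fsdist_def)

lemma TP_exists_component: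
  assumes "ProdDist n A \<mu>" "i < n" "t \<in> dsupp (\<mu> i)"
  shows "\<exists>\<theta>\<in>TP n \<mu>. \<theta> i = t"
proof -
  have "\<forall>j<n. \<exists>x. x \<in> dsupp (\<mu> j)"
    using assms(1) dsupp_nonempty by (fastforce simp: ProdDist_def)
  then obtain w where w: "\<And>j. j < n \<Longrightarrow> w j \<in> dsupp (\<mu> j)" by metis
  have "(restrict w {..<n})(i := t) \<in> TP n \<mu>"
    using assms(2,3) w by (auto simp: TP_def PiE_iff extensional_def)
  then show ?thesis by (metis fun_upd_same)
qed

lemma muminus_nonneg: "(\<And>j x. j < n \<Longrightarrow> 0 \<le> \<mu> j x) \<Longrightarrow> 0 \<le> muminus n \<mu> i \<theta>"
  unfolding muminus_def by (intro prod_nonneg) auto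

lemma sum_muminus_TPi:
  assumes fin: "\<And>j. j < n \<Longrightarrow> finite (dsupp (\<mu> j))" and i: "i < n"
  shows "(\<Sum>\<theta>\<in>TPi n \<mu> i t. muminus n \<mu> i \<theta>) = (\<Prod>j\<in>{..<n} - {i}. sum (\<mu> j) (dsupp (\<mu> j)))"
proof -
  define f where "f j x = (if j = i then 1 else \<mu> j x)" for j x
  have "muminus n \<mu> i \<theta> = (\<Prod>j<n. f j (\<theta> j))" for \<theta>
    using i by (simp add: muminus_def f_def prod.remove)
  then have "(\<Sum>\<theta>\<in>TPi n \<mu> i t. muminus n \<mu> i \<theta>)
      = (\<Prod>j<n. \<Sum>x\<in>(if j = i then {t} else dsupp (\<mu> j)). f j x)"
    unfolding TPi_def using fin by (subst prod_sum_PiE) auto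
  also have "\<dots> = (\<Prod>j\<in>{..<n} - {i}. sum (\<mu> j) (dsupp (\<mu> j)))"
    using i by (simp add: prod.remove f_def)
  finally show ?thesis .
qed

lemma pay_obs_monomorphic:
  assumes "\<And>j. j < n \<Longrightarrow> j \<noteq> i \<Longrightarrow> s j (\<theta> j) = \<sigma> j \<and> b \<theta> j = \<sigma> j"
  shows "pay_obs n A p b s \<theta> i u \<rho> =
    (\<Sum>T\<in>Pow ({..<n} - {i}). p ^ (n - 1 - card T) * (1 - p) ^ card T) * mlext n A u (\<sigma>(i := \<rho>))"
proof -
  have "mlext n A u ((mix T (sprof s \<theta>) (b \<theta>))(i := \<rho>)) = mlext n A u (\<sigma>(i := \<rho>))" for T
    using assms by (intro mlext_cong) (auto simp: mix_def sprof_def)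
  then show ?thesis by (simp add: pay_obs_def sum_distrib_right)
qed

lemma pay_obs_const_type:
  assumes "\<And>j. j < n \<Longrightarrow> finite (A j)"
    and "\<And>j. j < n \<Longrightarrow> s j (\<theta> j) \<in> Delta (A j) \<and> b \<theta> j \<in> Delta (A j)"
    and "\<rho> \<in> Delta (A i)"
  shows "pay_obs n A p b s \<theta> i (const_type n A c) \<rho> =
    (\<Sum>T\<in>Pow ({..<n} - {i}). p ^ (n - 1 - card T) * (1 - p) ^ card T) * c"
proof -
  have "mlext n A (const_type n A c) ((mix T (sprof s \<theta>) (b \<theta>))(i := \<rho>)) = c" for T
    using assms by (intro mlext_const_type) (auto simp: MixedProfs_def mix_def sprof_def)
  then show ?thesis by (simp add: pay_obs_def sum_distrib_right)
qed

lemma obs_weights_pos: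
  fixes p :: real
  assumes "0 < p" "p \<le> 1" "finite S"
  shows "0 < (\<Sum>T\<in>Pow S. p ^ (m - card T) * (1 - p) ^ card T)"
  by (rule sum_pos2[where i = "{}"]) (use assms in auto)

lemma equilibrium_monomorphic_imp_nash:
  assumes eq: "is_equilibrium n A p \<mu> b s" and p: "0 < p" "p \<le> 1"
    and \<theta>: "\<theta> \<in> TP n \<mu>" and i: "i < n"
    and mono: "\<And>j. j < n \<Longrightarrow> b \<theta> j = \<sigma> j \<and> s j (\<theta> j) = \<sigma> j"
    and \<rho>: "\<rho> \<in> Delta (A i)"
  shows "mlext n A (\<theta> i) (\<sigma>(i := \<rho>)) \<le> mlext n A (\<theta> i) \<sigma>"
proof -
  let ?W = "\<Sum>T\<in>Pow ({..<n} - {i}). p ^ (n - 1 - card T) * (1 - p) ^ card T"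
  have pay: "pay_obs n A p b s \<theta> i (\<theta> i) \<rho>' = ?W * mlext n A (\<theta> i) (\<sigma>(i := \<rho>'))" for \<rho>'
    using mono by (intro pay_obs_monomorphic) auto
  have "pay_obs n A p b s \<theta> i (\<theta> i) \<rho> \<le> pay_obs n A p b s \<theta> i (\<theta> i) (b \<theta> i)"
    using eq \<theta> i \<rho> by (auto simp: is_equilibrium_def)
  then have "?W * mlext n A (\<theta> i) (\<sigma>(i := \<rho>)) \<le> ?W * mlext n A (\<theta> i) \<sigma>"
    using mono[OF i] by (simp add: pay)
  moreover have "0 < ?W" using p by (intro obs_weights_pos) auto
  ultimately show ?thesis by simp
qed

text \<open>T = {} yields the observing play b theta, T = {..<n} the non-observing play s.\<close>
lemma point_mass_outcome_imp_monomorphic: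
  assumes finA: "\<And>j. j < n \<Longrightarrow> finite (A j)" and p: "0 < p" "p < 1"
    and PD: "ProdDist n A \<mu>" and eq: "is_equilibrium n A p \<mu> b s"
    and a: "a \<in> PureProfs n A"
    and out: "\<And>a'. a' \<in> PureProfs n A \<Longrightarrow> outcome n p \<mu> b s a' = (if a' = a then 1 else 0)"
    and \<theta>: "\<theta> \<in> TP n \<mu>" and T: "T \<subseteq> {..<n}" and i: "i < n"
  shows "mix T (sprof s \<theta>) (b \<theta>) i = pure_mixed a i"
proof -
  let ?X = "\<lambda>\<theta> T. mix T (sprof s \<theta>) (b \<theta>)"
  let ?w = "\<lambda>T::nat set. p ^ (n - card T) * (1 - p) ^ card T"
  have X: "?X \<theta>' T' \<in> MixedProfs n A" if "\<theta>' \<in> TP n \<mu>" for \<theta>' T'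
    using eq that by (auto simp: MixedProfs_def mix_def sprof_def is_equilibrium_def TP_component)
  have X_nonneg: "0 \<le> (\<Prod>j<n. ?X \<theta>' T' j (a' j))" if "\<theta>' \<in> TP n \<mu>" for \<theta>' T' a'
    using X[OF that] by (intro prod_nonneg) (auto simp: MixedProfs_def Delta_def)
  have \<mu>_nonneg: "\<And>j x. j < n \<Longrightarrow> 0 \<le> \<mu> j x" and fin: "\<And>j. j < n \<Longrightarrow> finite (dsupp (\<mu> j))"
    using PD by (auto simp: ProdDist_def fsdist_def)
  have \<mu>_pos: "0 < (\<Prod>j<n. \<mu> j (\<theta>' j))" if "\<theta>' \<in> TP n \<mu>" for \<theta>'
    using \<mu>_nonneg TP_component[OF that]
    by (intro prod_pos) (auto simp: dsupp_def order_less_le)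
  have cancel: "x = 0" if "c * x = 0" "0 < c" for c x :: real
    using that by simp
  have "(\<Prod>j<n. ?X \<theta> T j (a' j)) = 0" if a': "a' \<in> PureProfs n A" "a' \<noteq> a" for a'
  proof -
    have finTP: "finite (TP n \<mu>)" unfolding TP_def using fin by (intro finite_PiE) auto
    have "(\<Sum>\<theta>'\<in>TP n \<mu>. (\<Prod>j<n. \<mu> j (\<theta>' j)) * (\<Sum>T'\<in>Pow {..<n}. ?w T' * (\<Prod>j<n. ?X \<theta>' T' j (a' j)))) = 0"
      using out[OF a'(1)] a'(2) by (simp add: outcome_def)
    then have "(\<Prod>j<n. \<mu> j (\<theta> j)) * (\<Sum>T'\<in>Pow {..<n}. ?w T' * (\<Prod>j<n. ?X \<theta> T' j (a' j))) = 0"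
      using finTP \<theta> p X_nonneg \<mu>_pos
      by (subst (asm) sum_nonneg_eq_0_iff) (auto intro!: mult_nonneg_nonneg sum_nonneg simp: less_imp_le)
    then have "(\<Sum>T'\<in>Pow {..<n}. ?w T' * (\<Prod>j<n. ?X \<theta> T' j (a' j))) = 0"
      using \<mu>_pos[OF \<theta>] by (rule cancel)
    then have "?w T * (\<Prod>j<n. ?X \<theta> T j (a' j)) = 0"
      using T p X_nonneg[OF \<theta>] by (subst (asm) sum_nonneg_eq_0_iff) auto
    moreover have "0 < ?w T" using p by simp
    ultimately show ?thesis by (rule cancel)
  qed
  then show ?thesis
    using MixedProfs_concentrated_eq_pure_mixed[OF finA X[OF \<theta>] a _ i] by blast
qed

definition mutant_play :: "nat \<Rightarrow> 'a tprof \<Rightarrow> 'a mprof \<Rightarrow> 'a mprof \<Rightarrow> 'a tprof \<Rightarrow> 'a mprof" where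
  "mutant_play n mt \<sigma> \<tau> \<theta> = (if \<theta> = restrict mt {..<n} then \<tau> else \<sigma>)"

lemma mutant_play_incumbent: "i < n \<Longrightarrow> \<theta> i \<noteq> mt i \<Longrightarrow> mutant_play n mt \<sigma> \<tau> \<theta> = \<sigma>"
  by (auto simp: mutant_play_def)

lemma mutant_entry_incumbent_best_reply:
  assumes "i < n" "\<theta> i \<noteq> mt i" "0 \<le> p" "p \<le> 1"
    and "mlext n A u (\<sigma>(i := \<rho>)) \<le> mlext n A u \<sigma>"
  shows "pay_obs n A p (mutant_play n mt \<sigma> \<tau>) (\<lambda>i _. \<sigma> i) \<theta> i u \<rho>
       \<le> pay_obs n A p (mutant_play n mt \<sigma> \<tau>) (\<lambda>i _. \<sigma> i) \<theta> i u (\<sigma> i)"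
proof -
  let ?W = "\<Sum>T\<in>Pow ({..<n} - {i}). p ^ (n - 1 - card T) * (1 - p) ^ card T"
  have "mutant_play n mt \<sigma> \<tau> \<theta> = \<sigma>" using assms(1,2) by (rule mutant_play_incumbent)
  then have "pay_obs n A p (mutant_play n mt \<sigma> \<tau>) (\<lambda>i _. \<sigma> i) \<theta> i u \<rho>' = ?W * mlext n A u (\<sigma>(i := \<rho>'))"
    for \<rho>'
    by (intro pay_obs_monomorphic) simp
  moreover have "0 \<le> ?W" using assms(3,4) by (intro sum_nonneg) auto
  ultimately show ?thesis using assms(5) by (simp add: mult_left_mono)
qed

lemma nash_imp_mutant_entry_equilibrium:
  assumes finA: "\<And>j. j < n \<Longrightarrow> finite (A j)"
    and \<sigma>: "\<sigma> \<in> MixedProfs n A" and \<tau>: "\<tau> \<in> MixedProfs n A"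
    and nash: "\<And>i t \<rho>. i < n \<Longrightarrow> t \<in> dsupp (\<mu> i) \<Longrightarrow> \<rho> \<in> Delta (A i) \<Longrightarrow>
                 mlext n A t (\<sigma>(i := \<rho>)) \<le> mlext n A t \<sigma>"
    and indifferent: "\<And>j. j < n \<Longrightarrow> mt j = const_type n A (c j)"
    and new: "\<And>j. j < n \<Longrightarrow> mt j \<notin> dsupp (\<mu> j)"
    and supp: "\<And>j. j < n \<Longrightarrow> dsupp (\<mu>' j) \<subseteq> insert (mt j) (dsupp (\<mu> j))"
    and nonneg: "\<And>j x. j < n \<Longrightarrow> 0 \<le> \<mu>' j x"
    and p: "0 \<le> p" "p \<le> 1"
  shows "is_equilibrium n A p \<mu>' (mutant_play n mt \<sigma> \<tau>) (\<lambda>i _. \<sigma> i)"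
proof -
  let ?b = "mutant_play n mt \<sigma> \<tau>" and ?s = "\<lambda>i (_::'a ptype). \<sigma> i"
  let ?W = "\<lambda>i. \<Sum>T\<in>Pow ({..<n} - {i}). p ^ (n - 1 - card T) * (1 - p) ^ card T"
  have \<sigma>D: "\<And>j. j < n \<Longrightarrow> \<sigma> j \<in> Delta (A j)" using \<sigma> by (simp add: MixedProfs_def)
  have bD: "\<And>\<theta> j. j < n \<Longrightarrow> ?b \<theta> j \<in> Delta (A j)"
    using \<sigma> \<tau> by (auto simp: mutant_play_def MixedProfs_def)
  have mutant_pay: "pay_obs n A p ?b ?s \<theta> i (mt i) \<rho> = ?W i * c i"
    if "i < n" "\<rho> \<in> Delta (A i)" for \<theta> i \<rho>
    using that bD \<sigma>D by (simp add: indifferent pay_obs_const_type[OF finA])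
  have incumbent_br: "pay_obs n A p ?b ?s \<theta> i t \<rho> \<le> pay_obs n A p ?b ?s \<theta> i t (\<sigma> i)"
    if "i < n" "\<theta> i = t" "t \<in> dsupp (\<mu> i)" "\<rho> \<in> Delta (A i)" for \<theta> i t \<rho>
    using that new p nash by (intro mutant_entry_incumbent_best_reply) auto
  show ?thesis
    unfolding is_equilibrium_def
  proof (intro conjI ballI allI impI)
    fix \<theta> i assume \<theta>: "\<theta> \<in> TP n \<mu>'" and i: "i < n"
    show "?b \<theta> i \<in> Delta (A i)" using bD i .
    fix \<rho> assume \<rho>: "\<rho> \<in> Delta (A i)"
    from TP_component[OF \<theta> i] supp[OF i] consider "\<theta> i = mt i" | "\<theta> i \<in> dsupp (\<mu> i)" by blast
    then show "pay_obs n A p ?b ?s \<theta> i (\<theta> i) \<rho> \<le> pay_obs n A p ?b ?s \<theta> i (\<theta> i) (?b \<theta> i)"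
    proof cases
      case 1
      then show ?thesis using i \<rho> bD mutant_pay by simp
    next
      case 2
      then have "?b \<theta> i = \<sigma> i" using i new by (metis mutant_play_incumbent)
      then show ?thesis using incumbent_br i 2 \<rho> by simp
    qed
  next
    fix i t assume i: "i < n" and t: "t \<in> dsupp (\<mu>' i)"
    show "\<sigma> i \<in> Delta (A i)" using \<sigma>D i .
    fix \<rho> assume \<rho>: "\<rho> \<in> Delta (A i)"
    from t supp[OF i] consider "t = mt i" | "t \<in> dsupp (\<mu> i)" by blast
    then show "pay_nobs n A p \<mu>' ?b ?s i t \<rho> \<le> pay_nobs n A p \<mu>' ?b ?s i t (\<sigma> i)"
    proof cases
      case 1
      then show ?thesis using i \<rho> \<sigma>D by (simp add: pay_nobs_def mutant_pay)
    next
      case 2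
      then show ?thesis
        unfolding pay_nobs_def using i \<rho> nonneg
        by (intro sum_mono mult_left_mono incumbent_br muminus_nonneg) (auto dest: TPi_component)
    qed
  qed
qed

lemma avgfit_mutant_entry:
  assumes i: "i < n" and fin: "\<And>j. j < n \<Longrightarrow> finite (dsupp (\<mu>' j))"
    and mt: "\<And>j. j < n \<Longrightarrow> mt j \<in> dsupp (\<mu>' j)"
  shows "avgfit n A \<pi> p \<mu>' (mutant_play n mt \<sigma> \<tau>) (\<lambda>i _. \<sigma> i) i t =
    (\<Sum>\<theta>\<in>TPi n \<mu>' i t. muminus n \<mu>' i \<theta>) *
      (\<Sum>T\<in>Pow {..<n}. p ^ (n - card T) * (1 - p) ^ card T) * mlext n A (\<pi> i) \<sigma>
    + (if t = mt i then muminus n \<mu>' i (restrict mt {..<n}) * observed_gain n A p (\<pi> i) \<sigma> \<tau> else 0)"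
proof -
  let ?W = "\<Sum>T\<in>Pow {..<n}. p ^ (n - card T) * (1 - p) ^ card T"
  let ?\<theta>s = "restrict mt {..<n}"
  have fitness: "(\<Sum>T\<in>Pow {..<n}. p ^ (n - card T) * (1 - p) ^ card T *
        mlext n A (\<pi> i) (mix T (sprof (\<lambda>i _. \<sigma> i) \<theta>) (mutant_play n mt \<sigma> \<tau> \<theta>)))
      = ?W * mlext n A (\<pi> i) \<sigma> + (if \<theta> = ?\<theta>s then observed_gain n A p (\<pi> i) \<sigma> \<tau> else 0)" for \<theta>
  proof -
    have "sprof (\<lambda>i _. \<sigma> i) \<theta> = \<sigma>" by (simp add: sprof_def)
    then show ?thesis
      by (simp add: mutant_play_def observed_gain_def algebra_simps sum_subtractf sum_distrib_left)
  qed
  have "avgfit n A \<pi> p \<mu>' (mutant_play n mt \<sigma> \<tau>) (\<lambda>i _. \<sigma> i) i t =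
      (\<Sum>\<theta>\<in>TPi n \<mu>' i t. muminus n \<mu>' i \<theta> * (?W * mlext n A (\<pi> i) \<sigma>) +
        (if \<theta> = ?\<theta>s then muminus n \<mu>' i \<theta> * observed_gain n A p (\<pi> i) \<sigma> \<tau> else 0))"
    unfolding avgfit_def fitness by (intro sum.cong) (auto simp: algebra_simps)
  also have "\<dots> = (\<Sum>\<theta>\<in>TPi n \<mu>' i t. muminus n \<mu>' i \<theta>) * ?W * mlext n A (\<pi> i) \<sigma>
      + (if ?\<theta>s \<in> TPi n \<mu>' i t then muminus n \<mu>' i ?\<theta>s * observed_gain n A p (\<pi> i) \<sigma> \<tau> else 0)"
    using finite_PiE[of "{..<n}" "\<lambda>j. if j = i then {t} else dsupp (\<mu>' j)"] fin
    by (simp add: sum.distrib sum_distrib_right mult.assoc TPi_def)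
  also have "(?\<theta>s \<in> TPi n \<mu>' i t) = (t = mt i)"
    using mt i by (auto simp: TPi_def PiE_iff)
  finally show ?thesis .
qed

lemma avgfit_incumbent_less_mutant:
  assumes i: "i < n" and fin: "\<And>j. j < n \<Longrightarrow> finite (dsupp (\<mu>' j))"
    and mt: "\<And>j. j < n \<Longrightarrow> mt j \<in> dsupp (\<mu>' j)" and nonneg: "\<And>j x. j < n \<Longrightarrow> 0 \<le> \<mu>' j x"
    and t: "t \<noteq> mt i" and gain: "0 < observed_gain n A p (\<pi> i) \<sigma> \<tau>"
  shows "avgfit n A \<pi> p \<mu>' (mutant_play n mt \<sigma> \<tau>) (\<lambda>i _. \<sigma> i) i t
       < avgfit n A \<pi> p \<mu>' (mutant_play n mt \<sigma> \<tau>) (\<lambda>i _. \<sigma> i) i (mt i)"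
proof -
  have "0 < muminus n \<mu>' i (restrict mt {..<n})"
    unfolding muminus_def using mt nonneg
    by (intro prod_pos) (auto simp: dsupp_def order_less_le)
  then show ?thesis
    using gain t by (simp add: avgfit_mutant_entry[OF i fin mt] sum_muminus_TPi[OF fin i])
qed

lemma dsupp_postentry:
  assumes "j \<in> J" "0 < \<epsilon> j" "\<epsilon> j < 1" "mt j \<notin> dsupp (\<mu> j)"
  shows "dsupp (postentry \<mu> J mt \<epsilon> j) = insert (mt j) (dsupp (\<mu> j))"
  using assms by (auto simp: postentry_def dsupp_def)

lemma postentry_nonneg:
  "(\<And>x. 0 \<le> \<mu> j x) \<Longrightarrow> 0 \<le> \<epsilon> j \<Longrightarrow> \<epsilon> j \<le> 1 \<Longrightarrow> 0 \<le> postentry \<mu> J mt \<epsilon> j x"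
  by (simp add: postentry_def)

lemma stable_entry_all_populations:
  assumes st: "stable n A \<pi> p \<mu> b s" and n: "0 < n"
    and mt: "\<And>j. j < n \<Longrightarrow> mt j \<in> Theta n A - dsupp (\<mu> j)"
  obtains \<eta> e where "0 \<le> \<eta>" "0 < e" "e < 1"
    "let \<mu>' = postentry \<mu> {..<n} mt (\<lambda>_. e) in
     \<forall>(b', s')\<in>Nearby n A p \<mu> b s \<mu>' \<eta>.
       (\<exists>j\<in>{..<n}. \<forall>t\<in>dsupp (\<mu> j). avgfit n A \<pi> p \<mu>' b' s' j (mt j) < avgfit n A \<pi> p \<mu>' b' s' j t) \<or>
       (\<forall>i<n. \<forall>t\<in>dsupp (\<mu>' i). \<forall>t'\<in>dsupp (\<mu>' i). avgfit n A \<pi> p \<mu>' b' s' i t = avgfit n A \<pi> p \<mu>' b' s' i t')"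
proof -
  obtain \<eta> eb where "0 \<le> \<eta>" "0 < eb" "eb < 1" and entry:
    "\<And>\<epsilon>. (\<forall>j\<in>{..<n}. 0 < \<epsilon> j \<and> \<epsilon> j < 1) \<and> Max (\<epsilon> ` {..<n}) < eb \<Longrightarrow>
      (let \<mu>' = postentry \<mu> {..<n} mt \<epsilon> in
       Nearby n A p \<mu> b s \<mu>' \<eta> \<noteq> {} \<and>
       (\<forall>(b', s')\<in>Nearby n A p \<mu> b s \<mu>' \<eta>.
         (\<exists>j\<in>{..<n}. \<forall>t\<in>dsupp (\<mu> j). avgfit n A \<pi> p \<mu>' b' s' j t > avgfit n A \<pi> p \<mu>' b' s' j (mt j)) \<or>
         (\<forall>i<n. \<forall>t\<in>dsupp (\<mu>' i). \<forall>t'\<in>dsupp (\<mu>' i). avgfit n A \<pi> p \<mu>' b' s' i t = avgfit n A \<pi> p \<mu>' b' s' i t')))"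
    using st n mt unfolding stable_def
    by (auto dest!: spec[of _ "{..<n}"] spec[of _ mt] spec[of _ 1])
  have "Max ((\<lambda>_. eb / 2) ` {..<n}) = eb / 2" using n by (simp add: image_constant_conv lessThan_empty_iff)
  then show thesis
    using that[of \<eta> "eb / 2"] entry[of "\<lambda>_. eb / 2"] \<open>0 \<le> \<eta>\<close> \<open>0 < eb\<close> \<open>eb < 1\<close>
    by (simp add: Let_def)
qed

lemma mutant_entry_nearby:
  assumes eq: "is_equilibrium n A p \<mu>' (mutant_play n mt \<sigma> \<tau>) (\<lambda>i _. \<sigma> i)"
    and n: "0 < n" and neA: "\<And>j. j < n \<Longrightarrow> A j \<noteq> {}" and "0 \<le> \<eta>"
    and new: "\<And>j. j < n \<Longrightarrow> mt j \<notin> dsupp (\<mu> j)"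
    and b: "\<And>\<theta> j. \<theta> \<in> TP n \<mu> \<Longrightarrow> j < n \<Longrightarrow> b \<theta> j = \<sigma> j"
    and s: "\<And>\<theta> j. \<theta> \<in> TP n \<mu> \<Longrightarrow> j < n \<Longrightarrow> s j (\<theta> j) = \<sigma> j"
  shows "(mutant_play n mt \<sigma> \<tau>, \<lambda>i _. \<sigma> i) \<in> Nearby n A p \<mu> b s \<mu>' \<eta>"
proof -
  have "mdist (A i) f f = 0" if "i < n" for i f
    using neA[OF that] by (simp add: mdist_def image_constant_conv)
  moreover have "mutant_play n mt \<sigma> \<tau> \<theta> = \<sigma>" if "\<theta> \<in> TP n \<mu>" for \<theta>
    using TP_component[OF that n] new[OF n] by (intro mutant_play_incumbent[OF n]) auto
  ultimately show ?thesis
    using eq \<open>0 \<le> \<eta>\<close> b s by (auto simp: Nearby_def Bp_def)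
qed

lemma fitter_mutants_refute_stability_alternatives:
  fixes F :: "nat \<Rightarrow> 'a ptype \<Rightarrow> real"
  assumes n: "0 < n" and supp_ne: "\<And>j. j < n \<Longrightarrow> dsupp (\<mu> j) \<noteq> {}"
    and supp': "\<And>j. j < n \<Longrightarrow> dsupp (\<mu>' j) = insert (mt j) (dsupp (\<mu> j))"
    and fitter: "\<And>i t. i < n \<Longrightarrow> t \<in> dsupp (\<mu> i) \<Longrightarrow> F i t < F i (mt i)"
  shows "\<not> ((\<exists>j\<in>{..<n}. \<forall>t\<in>dsupp (\<mu> j). F j (mt j) < F j t) \<or>
            (\<forall>i<n. \<forall>t\<in>dsupp (\<mu>' i). \<forall>t'\<in>dsupp (\<mu>' i). F i t = F i t'))"
proof
  assume "(\<exists>j\<in>{..<n}. \<forall>t\<in>dsupp (\<mu> j). F j (mt j) < F j t) \<or>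
          (\<forall>i<n. \<forall>t\<in>dsupp (\<mu>' i). \<forall>t'\<in>dsupp (\<mu>' i). F i t = F i t')"
  then show False
  proof
    assume "\<exists>j\<in>{..<n}. \<forall>t\<in>dsupp (\<mu> j). F j (mt j) < F j t"
    then obtain j t where "j < n" "t \<in> dsupp (\<mu> j)" "F j (mt j) < F j t"
      using supp_ne by blast
    then show False using fitter by (meson less_asym)
  next
    assume equal: "\<forall>i<n. \<forall>t\<in>dsupp (\<mu>' i). \<forall>t'\<in>dsupp (\<mu>' i). F i t = F i t'"
    obtain t where "t \<in> dsupp (\<mu> 0)" using supp_ne[OF n] by blast
    then show False using equal fitter[OF n] supp'[OF n] n by (metis insertCI less_irrefl)
  qed
qed

lemma stable_monomorphic_imp_observed_gain_nonpos:
  assumes n: "0 < n" and finA: "\<And>j. j < n \<Longrightarrow> finite (A j)" and neA: "\<And>j. j < n \<Longrightarrow> A j \<noteq> {}"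
    and p: "0 \<le> p" "p \<le> 1" and \<sigma>: "\<sigma> \<in> MixedProfs n A" and \<tau>: "\<tau> \<in> MixedProfs n A"
    and PD: "ProdDist n A \<mu>" and stab: "stable n A \<pi> p \<mu> b s"
    and b: "\<And>\<theta> j. \<theta> \<in> TP n \<mu> \<Longrightarrow> j < n \<Longrightarrow> b \<theta> j = \<sigma> j"
    and s: "\<And>\<theta> j. \<theta> \<in> TP n \<mu> \<Longrightarrow> j < n \<Longrightarrow> s j (\<theta> j) = \<sigma> j"
    and nash: "\<And>i t \<rho>. i < n \<Longrightarrow> t \<in> dsupp (\<mu> i) \<Longrightarrow> \<rho> \<in> Delta (A i) \<Longrightarrow>
                 mlext n A t (\<sigma>(i := \<rho>)) \<le> mlext n A t \<sigma>"
  shows "\<exists>i<n. observed_gain n A p (\<pi> i) \<sigma> \<tau> \<le> 0"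
proof (rule ccontr)
  assume "\<not> ?thesis"
  then have gain: "\<And>i. i < n \<Longrightarrow> 0 < observed_gain n A p (\<pi> i) \<sigma> \<tau>" by force
  have \<mu>_nonneg: "\<And>j x. j < n \<Longrightarrow> 0 \<le> \<mu> j x" and fin: "\<And>j. j < n \<Longrightarrow> finite (dsupp (\<mu> j))"
    and supp_ne: "\<And>j. j < n \<Longrightarrow> dsupp (\<mu> j) \<noteq> {}"
    using PD dsupp_nonempty by (auto simp: ProdDist_def fsdist_def)
  have "PureProfs n A \<noteq> {}" using neA by (simp add: PureProfs_def PiE_eq_empty_iff)
  then have "\<forall>j<n. \<exists>c. const_type n A c \<notin> dsupp (\<mu> j)"
    using exists_const_type_notin fin by blast
  then obtain c where c: "\<And>j. j < n \<Longrightarrow> const_type n A (c j) \<notin> dsupp (\<mu> j)" by metis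
  define mt where "mt j = const_type n A (c j)" for j
  have new: "\<And>j. j < n \<Longrightarrow> mt j \<notin> dsupp (\<mu> j)" by (simp add: mt_def c)
  then have "\<And>j. j < n \<Longrightarrow> mt j \<in> Theta n A - dsupp (\<mu> j)" by (simp add: mt_def const_type_Theta)
  from stable_entry_all_populations[OF stab n this]
  obtain \<eta> e where "0 \<le> \<eta>" "0 < e" "e < 1" and invaded:
    "let \<mu>' = postentry \<mu> {..<n} mt (\<lambda>_. e) in
     \<forall>(b', s')\<in>Nearby n A p \<mu> b s \<mu>' \<eta>.
       (\<exists>j\<in>{..<n}. \<forall>t\<in>dsupp (\<mu> j). avgfit n A \<pi> p \<mu>' b' s' j (mt j) < avgfit n A \<pi> p \<mu>' b' s' j t) \<or>
       (\<forall>i<n. \<forall>t\<in>dsupp (\<mu>' i). \<forall>t'\<in>dsupp (\<mu>' i). avgfit n A \<pi> p \<mu>' b' s' i t = avgfit n A \<pi> p \<mu>' b' s' i t')" .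
  define \<mu>' where "\<mu>' = postentry \<mu> {..<n} mt (\<lambda>_. e)"
  have supp': "\<And>j. j < n \<Longrightarrow> dsupp (\<mu>' j) = insert (mt j) (dsupp (\<mu> j))"
    unfolding \<mu>'_def using \<open>0 < e\<close> \<open>e < 1\<close> new by (intro dsupp_postentry) auto
  have nonneg': "\<And>j x. j < n \<Longrightarrow> 0 \<le> \<mu>' j x"
    unfolding \<mu>'_def using \<open>0 < e\<close> \<open>e < 1\<close> \<mu>_nonneg by (intro postentry_nonneg) auto
  let ?b = "mutant_play n mt \<sigma> \<tau>" and ?s = "\<lambda>i (_::'a ptype). \<sigma> i"
  have "is_equilibrium n A p \<mu>' ?b ?s"
    using p supp' by (intro nash_imp_mutant_entry_equilibrium[OF finA \<sigma> \<tau> nash _ new _ nonneg'])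
      (auto simp: mt_def)
  then have "(?b, ?s) \<in> Nearby n A p \<mu> b s \<mu>' \<eta>"
    using n neA \<open>0 \<le> \<eta>\<close> new b s by (rule mutant_entry_nearby)
  with invaded have
    "(\<exists>j\<in>{..<n}. \<forall>t\<in>dsupp (\<mu> j). avgfit n A \<pi> p \<mu>' ?b ?s j (mt j) < avgfit n A \<pi> p \<mu>' ?b ?s j t) \<or>
     (\<forall>i<n. \<forall>t\<in>dsupp (\<mu>' i). \<forall>t'\<in>dsupp (\<mu>' i). avgfit n A \<pi> p \<mu>' ?b ?s i t = avgfit n A \<pi> p \<mu>' ?b ?s i t')"
    unfolding Let_def \<mu>'_def[symmetric] by fast
  moreover have "avgfit n A \<pi> p \<mu>' ?b ?s i t < avgfit n A \<pi> p \<mu>' ?b ?s i (mt i)"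
    if "i < n" "t \<in> dsupp (\<mu> i)" for i t
  proof (rule avgfit_incumbent_less_mutant[OF that(1)])
    show "\<And>j. j < n \<Longrightarrow> finite (dsupp (\<mu>' j))" "\<And>j. j < n \<Longrightarrow> mt j \<in> dsupp (\<mu>' j)"
      using supp' fin by simp_all
    show "t \<noteq> mt i" using new[OF that(1)] that(2) by blast
  qed (use nonneg' gain[OF that(1)] in simp_all)
  ultimately show False
    using fitter_mutants_refute_stability_alternatives[where \<mu> = \<mu> and \<mu>' = \<mu>' and mt = mt,
        OF n supp_ne supp']
    by blast
qed

lemma stable_pure_imp_observed_gain_nonpos:
  assumes n: "0 < n" and finA: "\<And>j. j < n \<Longrightarrow> finite (A j)" and neA: "\<And>j. j < n \<Longrightarrow> A j \<noteq> {}"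
    and a: "a \<in> PureProfs n A" and p: "0 < p" "p < 1"
    and st: "stable_pure n A \<pi> p a" and \<tau>: "\<tau> \<in> MixedProfs n A"
  shows "\<exists>i<n. observed_gain n A p (\<pi> i) (pure_mixed a) \<tau> \<le> 0"
proof -
  obtain \<mu> b s where PD: "ProdDist n A \<mu>" and eq: "is_equilibrium n A p \<mu> b s"
    and stab: "stable n A \<pi> p \<mu> b s"
    and out: "\<And>a'. a' \<in> PureProfs n A \<Longrightarrow> outcome n p \<mu> b s a' = (if a' = a then 1 else 0)"
    using st unfolding stable_pure_def Bp_def by blast
  have b: "\<And>\<theta> j. \<theta> \<in> TP n \<mu> \<Longrightarrow> j < n \<Longrightarrow> b \<theta> j = pure_mixed a j"
    using point_mass_outcome_imp_monomorphic[OF finA p PD eq a out, of _ "{}"] by simp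
  have s: "\<And>\<theta> j. \<theta> \<in> TP n \<mu> \<Longrightarrow> j < n \<Longrightarrow> s j (\<theta> j) = pure_mixed a j"
    using point_mass_outcome_imp_monomorphic[OF finA p PD eq a out, of _ "{..<n}"]
    by (simp add: mix_def sprof_def)
  have nash: "mlext n A t ((pure_mixed a)(i := \<rho>)) \<le> mlext n A t (pure_mixed a)"
    if "i < n" "t \<in> dsupp (\<mu> i)" "\<rho> \<in> Delta (A i)" for i t \<rho>
    using TP_exists_component[OF PD that(1,2)] equilibrium_monomorphic_imp_nash[OF eq] p that b s
    by fastforce
  have \<sigma>: "pure_mixed a \<in> MixedProfs n A" using finA a by (rule pure_mixed_MixedProfs)
  show ?thesis
    by (rule stable_monomorphic_imp_observed_gain_nonpos[where \<sigma> = "pure_mixed a" and b = b and s = s])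
      (use n finA neA p \<sigma> \<tau> PD stab b s nash in simp_all)
qed

theorem mainTheorem14:
  fixes n :: nat and A :: "nat \<Rightarrow> 'a set" and \<pi> :: "nat \<Rightarrow> 'a prof \<Rightarrow> real"
    and astar :: "'a prof"
  assumes "1 \<le> n"
    and "\<forall>i<n. finite (A i) \<and> A i \<noteq> {}"
    and "astar \<in> PureProfs n A"
    and "\<forall>pb. 0 < pb \<and> pb < 1 \<longrightarrow> (\<exists>p. pb < p \<and> p < 1 \<and> stable_pure n A \<pi> p astar)"
  shows "weakly_pareto_efficient n A \<pi> (pure_mixed astar)"
  unfolding weakly_pareto_efficient_def strongly_pareto_dominates_def
proof
  assume "\<exists>\<tau>\<in>MixedProfs n A. \<forall>i<n. mlext n A (\<pi> i) (pure_mixed astar) < mlext n A (\<pi> i) \<tau>"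
  then obtain \<tau> where \<tau>: "\<tau> \<in> MixedProfs n A"
    and dom: "\<And>i. i < n \<Longrightarrow> mlext n A (\<pi> i) (pure_mixed astar) < mlext n A (\<pi> i) \<tau>" by blast
  have "eventually (\<lambda>p. \<forall>i\<in>{..<n}. 0 < observed_gain n A p (\<pi> i) (pure_mixed astar) \<tau>) (at_left 1)"
    using dom by (intro eventually_ball_finite ballI eventually_observed_gain_pos) auto
  then obtain pb where "pb < 1"
    and gain: "\<And>p. pb < p \<Longrightarrow> p < 1 \<Longrightarrow> \<forall>i<n. 0 < observed_gain n A p (\<pi> i) (pure_mixed astar) \<tau>"
    by (auto simp: eventually_at_left_field)
  have "0 < max pb (1/2)" "max pb (1/2) < 1" using \<open>pb < 1\<close> by auto
  then obtain p where "max pb (1/2) < p" "p < 1" "stable_pure n A \<pi> p astar"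
    using assms(4) by blast
  then show False
    using stable_pure_imp_observed_gain_nonpos[of n A astar p \<pi> \<tau>] assms gain \<tau> by force
qed

end
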